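(* For every $k\in\mathbb{N}$ and $w\in\mathbb{W}_k$, the bridge $(U_0^w,\dots,U_k^w)$ from the empty word to $w$ satisfies, for all $0\le m\le k-1$, $v\in\mathbb{W}_{m+1}$ (with $\mathbb{P}\{U_{m+1}^w=v\}>0$) and $u\in\mathbb{W}_m$, \[ \mathbb{P}\{U_m^{w} = u \mid U_{m+1}^{w} = v\} = \frac{\binom{v}{u}}{(m+1)^2}. \] In particular the backward transition dynamics of all bridges from the empty word are the same and consist of removing, at each step, one letter $a$ and one letter $b$ chosen uniformly at random (independently) from the current word.
   Context: For $n \in \mathbb{N}_0$, $\mathbb{W}_n$ denotes the set of words over the alphabet $\{a,b\}$ with exactly $n$ letters $a$ and $n$ letters $b$, and $\mathbb{W} := \bigsqcup_{n} \mathbb{W}_n$. For words $w,v$, $\binom{w}{v}$ denotes the number of occurrences of $v$ as a (not necessarily contiguous) sub-word of $w$. The Markov chain $(U_n)_{n\in\mathbb{N}_0}$ on $\mathbb{W}$ starts at the empty word; given $U_n \in \mathbb{W}_n$, first a letter $a$ is inserted uniformly at random into one of the $2n+1$ slots of $U_n$, then a letter $b$ is inserted uniformly at random into one of the $2n+2$ slots of the resulting word, giving $U_{n+1}$. For $w\in\mathbb{W}_k$, the bridge $(U_0^w,\dots,U_k^w)$ is the process $(U_0,\dots,U_k)$ conditioned on the event $\{U_k=w\}$. *)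

theory Defs
  imports "HOL-Probability.Probability"
begin

datatype letter = La | Lb

type_synonym word = "letter list"

definition W :: "nat \<Rightarrow> word set" where
  "W n = {w. count_list w La = n \<and> count_list w Lb = n}"

definition subword_count :: "word \<Rightarrow> word \<Rightarrow> nat" where
  "subword_count w v = card {I. I \<subseteq> {0..<length w} \<and> card I = length v \<and> nths w I = v}"

definition insert_at :: "nat \<Rightarrow> letter \<Rightarrow> word \<Rightarrow> word" where
  "insert_at i x u = take i u @ [x] @ drop i u"

definition step_pmf :: "word \<Rightarrow> word pmf" where
  "step_pmf u =
     pmf_of_set {0..length u} \<bind> (\<lambda>i. let u' = insert_at i La u in
     pmf_of_set {0..length u'} \<bind> (\<lambda>j. return_pmf (insert_at j Lb u')))"

fun path_pmf :: "nat \<Rightarrow> word list pmf" where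
  "path_pmf 0 = return_pmf [[]]"
| "path_pmf (Suc k) = path_pmf k \<bind> (\<lambda>p. map_pmf (\<lambda>v. p @ [v]) (step_pmf (last p)))"

definition bridge_pmf :: "nat \<Rightarrow> word \<Rightarrow> word list pmf" where
  "bridge_pmf k w = cond_pmf (path_pmf k) {p. p ! k = w}"

definition bridge_back_prob :: "nat \<Rightarrow> word \<Rightarrow> nat \<Rightarrow> word \<Rightarrow> word \<Rightarrow> real" where
  "bridge_back_prob k w m u v =
     measure_pmf.prob (bridge_pmf k w) {p. p ! m = u \<and> p ! Suc m = v}
     / measure_pmf.prob (bridge_pmf k w) {p. p ! Suc m = v}"

end

theory Submission
  imports Defs
begin

text \<open>
  Write pi_n for the law of U_n and P(u, v) for the one-step transition probability.
  Because the chain is Markov, conditioning on U_k = w multiplies the joint law of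
  (U_m, U_(m+1)) by a factor depending only on U_(m+1); hence every bridge has the same
  backward kernel, the time reversal P(u, v) pi_m(u) / pi_(m+1)(v) of the chain.
  A pair of slots turning u into v (insert an a, then a b) is the same as a pair
  (position of an a, position of a b) of v whose removal leaves u, i.e. an occurrence of u
  in v; so P(u, v) = binom(v, u) / ((2m+1)(2m+2)). Every v in W_(m+1) has (m+1)^2 such
  removal pairs in total, which shows inductively that pi_n is uniform on W_n, with weight
  (n!)^2 / (2n)!. The ratio of consecutive weights cancels the factor (2m+1)(2m+2).
\<close>

section \<open>Inserting and deleting list entries\<close>

definition delete_at :: "nat \<Rightarrow> 'a list \<Rightarrow> 'a list" where
  "delete_at i xs = take i xs @ drop (Suc i) xs"

lemma delete_at_Cons_0 [simp]: "delete_at 0 (x # xs) = xs"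
  by (simp add: delete_at_def)

lemma delete_at_Cons_Suc [simp]: "delete_at (Suc i) (x # xs) = x # delete_at i xs"
  by (simp add: delete_at_def)

lemma length_delete_at [simp]: "i < length xs \<Longrightarrow> length (delete_at i xs) = length xs - 1"
  by (simp add: delete_at_def)

lemma length_insert_at [simp]: "i \<le> length u \<Longrightarrow> length (insert_at i x u) = Suc (length u)"
  by (simp add: insert_at_def)

lemma nth_insert_at_same [simp]: "i \<le> length u \<Longrightarrow> insert_at i x u ! i = x"
  by (simp add: insert_at_def nth_append)

lemma delete_at_insert_at [simp]: "i \<le> length u \<Longrightarrow> delete_at i (insert_at i x u) = u"
  by (simp add: insert_at_def delete_at_def)

lemma insert_at_delete_at: "i < length xs \<Longrightarrow> insert_at i (xs ! i) (delete_at i xs) = xs"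
  by (simp add: insert_at_def delete_at_def id_take_nth_drop[symmetric] min_def)

lemma count_list_insert_at:
  "i \<le> length u \<Longrightarrow> count_list (insert_at i x u) y = count_list u y + (if x = y then 1 else 0)"
proof -
  have "count_list u y = count_list (take i u @ drop i u) y" by simp
  then show ?thesis by (simp add: insert_at_def del: append_take_drop_id)
qed

lemma count_list_delete_at:
  "i < length xs \<Longrightarrow> count_list xs x = count_list (delete_at i xs) x + (if xs ! i = x then 1 else 0)"
proof -
  assume "i < length xs"
  then have "count_list xs x = count_list (take i xs @ [xs ! i] @ drop (Suc i) xs) x"
    by (simp flip: id_take_nth_drop)
  then show ?thesis by (simp add: delete_at_def)
qed

definition index_after_delete :: "nat \<Rightarrow> nat \<Rightarrow> nat" where
  "index_after_delete q p = (if q < p then p - 1 else p)"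

lemma index_after_delete_Suc_Suc [simp]:
  "index_after_delete (Suc q) (Suc p) = Suc (index_after_delete q p)"
  by (simp add: index_after_delete_def)

lemma index_after_delete_less:
  "p < length xs \<Longrightarrow> q < length xs \<Longrightarrow> p \<noteq> q \<Longrightarrow> index_after_delete q p < length (delete_at q xs)"
  by (auto simp: index_after_delete_def)

lemma nth_delete_at_index_after_delete:
  "p < length xs \<Longrightarrow> q < length xs \<Longrightarrow> p \<noteq> q \<Longrightarrow> delete_at q xs ! index_after_delete q p = xs ! p"
  by (auto simp: index_after_delete_def delete_at_def nth_append min_def)

lemma nths_cong: "(\<And>i. i < length xs \<Longrightarrow> i \<in> A \<longleftrightarrow> i \<in> B) \<Longrightarrow> nths xs A = nths xs B"
  unfolding nths_def by (auto simp: set_zip intro!: arg_cong[where f = "map fst"] filter_cong)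

lemma nths_Compl_singleton: "q < length xs \<Longrightarrow> nths xs (- {q}) = delete_at q xs"
proof (induction xs arbitrary: q)
  case (Cons x xs)
  then show ?case
    by (cases q) (auto simp: nths_Cons Collect_neg_eq intro: nths_all)
qed simp

lemma nths_Compl_doubleton:
  "p < length xs \<Longrightarrow> q < length xs \<Longrightarrow> p \<noteq> q \<Longrightarrow>
    nths xs (- {p, q}) = delete_at (index_after_delete q p) (delete_at q xs)"
proof (induction xs arbitrary: p q)
  case (Cons x xs)
  show ?case
  proof (cases p; cases q)
    fix p' q' assume pq: "p = Suc p'" "q = Suc q'"
    then have "{j. Suc j \<in> - {p, q}} = - {p', q'}" by auto
    with pq Cons show ?thesis by (simp add: nths_Cons)
  qed (use Cons.prems in \<open>auto simp: nths_Cons Collect_neg_eq index_after_delete_def nths_Compl_singleton\<close>)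
qed simp

lemma count_list_nths_Compl_doubleton:
  assumes "p < length xs" "q < length xs" "p \<noteq> q"
  shows "count_list xs x = count_list (nths xs (- {p, q})) x
    + (if xs ! p = x then 1 else 0) + (if xs ! q = x then 1 else 0)"
  using count_list_delete_at[of q xs x] assms
    count_list_delete_at[OF index_after_delete_less[OF assms], of x]
  by (simp add: nths_Compl_doubleton nth_delete_at_index_after_delete)

section \<open>Insertions, removals and subword occurrences\<close>

lemma length_eq_count_list_La_Lb: "length w = count_list w La + count_list w Lb"
proof (induction w)
  case (Cons x w)
  then show ?case by (cases x) auto
qed simp

lemma length_W: "w \<in> W n \<Longrightarrow> length w = 2 * n"
  by (simp add: W_def length_eq_count_list_La_Lb)

lemma W_0: "W 0 = {[]}"
proof -
  have "w = []" if "w \<in> W 0" for w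
    using that length_eq_count_list_La_Lb[of w] by (simp add: W_def)
  then show ?thesis by (auto simp: W_def)
qed

lemma finite_W: "finite (W n)"
proof (rule finite_subset)
  show "W n \<subseteq> {w. set w \<subseteq> UNIV \<and> length w = 2 * n}"
    by (auto simp: length_W)
  have "(UNIV :: letter set) = {La, Lb}"
    using letter.exhaust by auto
  then have "finite (UNIV :: letter set)" by (metis finite.emptyI finite_insert)
  then show "finite {w. set w \<subseteq> (UNIV :: letter set) \<and> length w = 2 * n}"
    by (rule finite_lists_length_eq)
qed

lemma insert_at_insert_at_in_W:
  "u \<in> W n \<Longrightarrow> i \<le> length u \<Longrightarrow> j \<le> Suc (length u) \<Longrightarrow> insert_at j Lb (insert_at i La u) \<in> W (Suc n)"
  by (simp add: W_def count_list_insert_at)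

lemma nths_Compl_doubleton_in_W:
  assumes "v \<in> W (Suc n)" "p < length v" "q < length v" "v ! p = La" "v ! q = Lb"
  shows "nths v (- {p, q}) \<in> W n"
proof -
  have "p \<noteq> q" using assms(4,5) by auto
  note count = count_list_nths_Compl_doubleton[OF assms(2,3) this]
  show ?thesis
    using assms(1,4,5) count[of La] count[of Lb] by (simp add: W_def)
qed

lemma nth_neq_of_nths_Compl_doubleton_in_W:
  assumes "v \<in> W (Suc n)" "nths v (- {p, q}) \<in> W n" "p < length v" "q < length v" "p \<noteq> q"
  shows "v ! p \<noteq> v ! q"
proof
  assume "v ! p = v ! q"
  then show False
    using assms(1,2) count_list_nths_Compl_doubleton[OF assms(3-5), of "v ! p"]
    by (cases "v ! p") (simp_all add: W_def)
qed

definition insertion_count :: "word \<Rightarrow> word \<Rightarrow> nat" where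
  "insertion_count u v = card {(i, j). i \<le> length u \<and> j \<le> Suc (length u)
     \<and> insert_at j Lb (insert_at i La u) = v}"

definition ab_removals :: "word \<Rightarrow> word \<Rightarrow> (nat \<times> nat) set" where
  "ab_removals u v = {(p, q). p < length v \<and> q < length v \<and> v ! p = La \<and> v ! q = Lb
     \<and> nths v (- {p, q}) = u}"

lemma finite_ab_removals: "finite (ab_removals u v)"
  by (rule finite_subset[of _ "{..<length v} \<times> {..<length v}"]) (auto simp: ab_removals_def)

text \<open>Inserting the b at a slot \<open>j \<le> i\<close> moves the a inserted at \<open>i\<close> to position \<open>i + 1\<close>.\<close>

lemma insertion_in_ab_removals:
  assumes i: "i \<le> length u" and j: "j \<le> Suc (length u)"
  shows "(if j \<le> i then Suc i else i, j) \<in> ab_removals u (insert_at j Lb (insert_at i La u))"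
proof -
  define p where "p = (if j \<le> i then Suc i else i)"
  let ?w = "insert_at i La u"
  let ?v = "insert_at j Lb ?w"
  have lengths: "length ?w = Suc (length u)" "length ?v = Suc (Suc (length u))"
    using i j by simp_all
  have p: "p < length ?v" "p \<noteq> j" "index_after_delete j p = i"
    using i lengths by (auto simp: p_def index_after_delete_def)
  have j': "j < length ?v" and delete: "delete_at j ?v = ?w"
    using j lengths by simp_all
  have "?v ! p = La"
    using nth_delete_at_index_after_delete[OF p(1) j' p(2)] p(3) delete i by simp
  moreover have "nths ?v (- {p, j}) = u"
    using nths_Compl_doubleton[OF p(1) j' p(2)] p(3) delete i by simp
  ultimately show ?thesis
    using p j' j lengths by (simp add: ab_removals_def p_def)
qed

lemma ab_removal_is_insertion:
  assumes "(p, q) \<in> ab_removals u v"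
  defines "i \<equiv> index_after_delete q p"
  shows "i \<le> length u" "q \<le> Suc (length u)" "insert_at q Lb (insert_at i La u) = v"
proof -
  have pq: "p < length v" "q < length v" "v ! p = La" "v ! q = Lb" "nths v (- {p, q}) = u"
    using assms(1) by (auto simp: ab_removals_def)
  then have "p \<noteq> q" by auto
  have i_less: "i < length (delete_at q v)"
    unfolding i_def using index_after_delete_less[OF pq(1,2) \<open>p \<noteq> q\<close>] .
  have u: "u = delete_at i (delete_at q v)"
    using nths_Compl_doubleton[OF pq(1,2) \<open>p \<noteq> q\<close>] pq(5) by (simp add: i_def)
  then have "length (delete_at q v) = Suc (length u)"
    using i_less by simp
  then show "i \<le> length u" "q \<le> Suc (length u)"
    using i_less pq(2) by simp_all
  have "delete_at q v ! i = La"
    using nth_delete_at_index_after_delete[OF pq(1,2) \<open>p \<noteq> q\<close>] pq(3) by (simp add: i_def)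
  then have "insert_at i La u = delete_at q v"
    using insert_at_delete_at[OF i_less] u by simp
  then show "insert_at q Lb (insert_at i La u) = v"
    using insert_at_delete_at[OF pq(2)] pq(4) by simp
qed

lemma insertion_count_eq_card_ab_removals: "insertion_count u v = card (ab_removals u v)"
proof -
  let ?slots = "{(i, j). i \<le> length u \<and> j \<le> Suc (length u) \<and> insert_at j Lb (insert_at i La u) = v}"
  let ?f = "\<lambda>(i, j). (if j \<le> i then Suc i else i, j)"
  let ?g = "\<lambda>(p, q). (index_after_delete q p, q)"
  have "bij_betw ?f ?slots (ab_removals u v)"
  proof (rule bij_betw_byWitness[where f' = ?g])
    show "\<forall>s\<in>?slots. ?g (?f s) = s"
      by (auto simp: index_after_delete_def)
    show "\<forall>r\<in>ab_removals u v. ?f (?g r) = r"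
      by (auto simp: ab_removals_def index_after_delete_def)
    show "?f ` ?slots \<subseteq> ab_removals u v"
      using insertion_in_ab_removals by auto
    show "?g ` ab_removals u v \<subseteq> ?slots"
      using ab_removal_is_insertion by auto
  qed
  then show ?thesis
    unfolding insertion_count_def by (rule bij_betw_same_card)
qed

lemma inj_on_Compl_ab_removals: "inj_on (\<lambda>(p, q). {0..<length v} - {p, q}) (ab_removals u v)"
proof (rule inj_onI, clarify)
  fix p q p' q'
  assume pq: "(p, q) \<in> ab_removals u v" and pq': "(p', q') \<in> ab_removals u v"
    and eq: "{0..<length v} - {p, q} = {0..<length v} - {p', q'}"
  have "{p, q} = {0..<length v} - ({0..<length v} - {p, q})"
    and "{p', q'} = {0..<length v} - ({0..<length v} - {p', q'})"
    using pq pq' by (auto simp: ab_removals_def)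
  then have "{p, q} = {p', q'}" using eq by simp
  moreover have "v ! p = La" "v ! q = Lb" "v ! p' = La" "v ! q' = Lb"
    using pq pq' by (simp_all add: ab_removals_def)
  ultimately show "p = p' \<and> q = q'"
    by (auto simp: doubleton_eq_iff)
qed

lemma occurrence_is_Compl_ab_removal:
  assumes u: "u \<in> W m" and v: "v \<in> W (Suc m)"
    and I: "I \<subseteq> {0..<length v}" "card I = length u" "nths v I = u"
  obtains p q where "(p, q) \<in> ab_removals u v" "I = {0..<length v} - {p, q}"
proof -
  have "finite I"
    using I(1) finite_subset by blast
  then have "card ({0..<length v} - I) = 2"
    using I(1,2) length_W[OF u] length_W[OF v] by (simp add: card_Diff_subset)
  then obtain a b where ab: "{0..<length v} - I = {a, b}" "a \<noteq> b"
    by (meson card_2_iff)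
  then have a_b: "a < length v" "b < length v" and I_eq: "I = {0..<length v} - {a, b}"
    using I(1) by auto
  have "nths v (- {a, b}) = nths v I"
    by (rule nths_cong) (auto simp: I_eq)
  then have u_eq: "nths v (- {a, b}) = u"
    using I(3) by simp
  then have "v ! a \<noteq> v ! b"
    using nth_neq_of_nths_Compl_doubleton_in_W[OF v _ a_b ab(2)] u by simp
  show ?thesis
  proof (cases "v ! a")
    case La
    with \<open>v ! a \<noteq> v ! b\<close> have "v ! b = Lb" by (cases "v ! b") auto
    then show ?thesis
      using that[of a b] La a_b u_eq I_eq by (simp add: ab_removals_def)
  next
    case Lb
    with \<open>v ! a \<noteq> v ! b\<close> have "v ! b = La" by (cases "v ! b") auto
    moreover have "{b, a} = {a, b}" by auto
    ultimately show ?thesis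
      using that[of b a] Lb a_b u_eq I_eq by (simp add: ab_removals_def)
  qed
qed

lemma subword_count_eq_card_ab_removals:
  assumes "u \<in> W m" "v \<in> W (Suc m)"
  shows "subword_count v u = card (ab_removals u v)"
proof -
  let ?h = "\<lambda>(p, q). {0..<length v} - {p, q}"
  have "?h ` ab_removals u v = {I. I \<subseteq> {0..<length v} \<and> card I = length u \<and> nths v I = u}"
  proof (intro equalityI subsetI)
    fix I assume "I \<in> ?h ` ab_removals u v"
    then obtain p q where pq: "(p, q) \<in> ab_removals u v" and I: "I = {0..<length v} - {p, q}"
      by auto
    then have "p < length v" "q < length v" "p \<noteq> q" "nths v (- {p, q}) = u"
      by (auto simp: ab_removals_def)
    moreover from this have "nths v I = nths v (- {p, q})"
      by (intro nths_cong) (auto simp: I)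
    moreover from calculation have "card I = length v - 2"
      unfolding I by (subst card_Diff_subset) auto
    ultimately show "I \<in> {I. I \<subseteq> {0..<length v} \<and> card I = length u \<and> nths v I = u}"
      using I length_W[OF assms(1)] length_W[OF assms(2)] by auto
  next
    fix I assume "I \<in> {I. I \<subseteq> {0..<length v} \<and> card I = length u \<and> nths v I = u}"
    then have I: "I \<subseteq> {0..<length v}" "card I = length u" "nths v I = u"
      by simp_all
    obtain p q where "(p, q) \<in> ab_removals u v" "I = {0..<length v} - {p, q}"
      using occurrence_is_Compl_ab_removal[OF assms I] .
    then show "I \<in> ?h ` ab_removals u v"
      by force
  qed
  then have "subword_count v u = card (?h ` ab_removals u v)"
    by (simp only: subword_count_def)
  also have "\<dots> = card (ab_removals u v)"
    using inj_on_Compl_ab_removals by (rule card_image)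
  finally show ?thesis .
qed

lemma insertion_count_eq_subword_count:
  "u \<in> W m \<Longrightarrow> v \<in> W (Suc m) \<Longrightarrow> insertion_count u v = subword_count v u"
  by (simp add: insertion_count_eq_card_ab_removals subword_count_eq_card_ab_removals)

lemma count_list_eq_card_positions: "count_list xs x = card {i. i < length xs \<and> xs ! i = x}"
  by (simp add: count_list_eq_length_filter length_filter_conv_card eq_commute)

lemma sum_card_ab_removals:
  assumes v: "v \<in> W (Suc m)"
  shows "(\<Sum>u\<in>W m. card (ab_removals u v)) = (Suc m)\<^sup>2"
proof -
  let ?positions = "\<lambda>x. {i. i < length v \<and> v ! i = x}"
  have "(\<Union>u\<in>W m. ab_removals u v) = ?positions La \<times> ?positions Lb"
    using nths_Compl_doubleton_in_W[OF v] by (auto simp: ab_removals_def)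
  moreover have "(\<Sum>u\<in>W m. card (ab_removals u v)) = card (\<Union>u\<in>W m. ab_removals u v)"
    by (rule card_UN_disjoint[symmetric]) (auto simp: finite_W finite_ab_removals, auto simp: ab_removals_def)
  ultimately show ?thesis
    using v by (simp add: card_cartesian_product W_def power2_eq_square
        flip: count_list_eq_card_positions)
qed

lemma sum_insertion_count:
  "v \<in> W (Suc m) \<Longrightarrow> (\<Sum>u\<in>W m. insertion_count u v) = (Suc m)\<^sup>2"
  by (simp add: insertion_count_eq_card_ab_removals sum_card_ab_removals)

lemma insertion_count_eq_0:
  assumes "u \<in> W m" "v \<notin> W (Suc m)"
  shows "insertion_count u v = 0"
proof -
  have "{(i, j). i \<le> length u \<and> j \<le> Suc (length u) \<and> insert_at j Lb (insert_at i La u) = v} = {}"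
    using insert_at_insert_at_in_W[OF assms(1)] assms(2) by blast
  then show ?thesis
    unfolding insertion_count_def by (simp only: card.empty)
qed

section \<open>One step and the marginals of the chain\<close>

lemma sum_indicator_singleton_eq_card:
  "finite A \<Longrightarrow> (\<Sum>x\<in>A. indicator {y} (f x) :: real) = real (card {x \<in> A. f x = y})"
  by (simp add: indicator_def sum.If_cases Int_def)

lemma pmf_step_pmf:
  "pmf (step_pmf u) v = real (insertion_count u v) / (real (Suc (length u)) * real (Suc (Suc (length u))))"
proof -
  let ?n = "length u"
  let ?slots_b = "\<lambda>i. {j \<in> {0..Suc ?n}. insert_at j Lb (insert_at i La u) = v}"
  let ?insert_b = "\<lambda>i. pmf_of_set {0..Suc ?n} \<bind>
    (\<lambda>j. return_pmf (insert_at j Lb (insert_at i La u)))"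
  have inner: "pmf (?insert_b i) v = real (card (?slots_b i)) / real (Suc (Suc ?n))"
    if "i \<le> ?n" for i
  proof -
    have "pmf (?insert_b i) v
        = (\<Sum>j\<in>{0..Suc ?n}. indicator {v} (insert_at j Lb (insert_at i La u))) / real (Suc (Suc ?n))"
      using that by (simp add: pmf_bind_pmf_of_set)
    also have "(\<Sum>j\<in>{0..Suc ?n}. indicator {v} (insert_at j Lb (insert_at i La u))) = real (card (?slots_b i))"
      by (rule sum_indicator_singleton_eq_card) simp
    finally show ?thesis .
  qed
  have "(\<Sum>i\<in>{0..?n}. card (?slots_b i)) = card (SIGMA i:{0..?n}. ?slots_b i)"
    by (rule card_SigmaI[symmetric]) auto
  also have "(SIGMA i:{0..?n}. ?slots_b i)
      = {(i, j). i \<le> ?n \<and> j \<le> Suc ?n \<and> insert_at j Lb (insert_at i La u) = v}"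
    by auto
  finally have count: "(\<Sum>i\<in>{0..?n}. card (?slots_b i)) = insertion_count u v"
    by (simp add: insertion_count_def)
  have "pmf (step_pmf u) v = (\<Sum>i\<in>{0..?n}. pmf (?insert_b i) v) / real (Suc ?n)"
    unfolding step_pmf_def Let_def by (simp add: pmf_bind_pmf_of_set)
  also have "(\<Sum>i\<in>{0..?n}. pmf (?insert_b i) v) = real (\<Sum>i\<in>{0..?n}. card (?slots_b i)) / real (Suc (Suc ?n))"
    by (simp add: inner sum_divide_distrib)
  finally show ?thesis
    unfolding count by (simp add: field_simps)
qed

lemma length_path_pmf: "p \<in> set_pmf (path_pmf n) \<Longrightarrow> length p = Suc n"
  by (induction n arbitrary: p) auto

definition marginal_pmf :: "nat \<Rightarrow> word pmf" where
  "marginal_pmf n = map_pmf last (path_pmf n)"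

lemma marginal_pmf_Suc: "marginal_pmf (Suc n) = marginal_pmf n \<bind> step_pmf"
  unfolding marginal_pmf_def by (simp add: map_bind_pmf bind_map_pmf map_pmf_comp o_def)

theorem pmf_marginal_pmf:
  "pmf (marginal_pmf n) x = (if x \<in> W n then (fact n)\<^sup>2 / fact (2 * n) else 0)"
proof (induction n arbitrary: x)
  case 0
  show ?case by (simp add: marginal_pmf_def W_0 indicator_def)
next
  case (Suc n)
  let ?c = "(fact n)\<^sup>2 / fact (2 * n) / (real (Suc (2 * n)) * real (Suc (Suc (2 * n)))) :: real"
  have support: "set_pmf (marginal_pmf n) \<subseteq> W n"
    using Suc.IH by (auto simp: set_pmf_iff split: if_splits)
  have "pmf (marginal_pmf (Suc n)) x = (\<integral>u. pmf (step_pmf u) x \<partial>marginal_pmf n)"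
    by (simp add: marginal_pmf_Suc pmf_bind)
  also have "\<dots> = (\<Sum>u\<in>W n. pmf (step_pmf u) x * pmf (marginal_pmf n) u)"
    using support by (intro integral_measure_pmf_real) (auto simp: finite_W)
  also have "\<dots> = (\<Sum>u\<in>W n. real (insertion_count u x) * ?c)"
    by (intro sum.cong refl) (simp add: Suc.IH pmf_step_pmf length_W)
  also have "\<dots> = (\<Sum>u\<in>W n. real (insertion_count u x)) * ?c"
    by (simp only: sum_distrib_right)
  also have "\<dots> = (if x \<in> W (Suc n) then (fact (Suc n))\<^sup>2 / fact (2 * Suc n) else 0)"
  proof (cases "x \<in> W (Suc n)")
    case True
    then have "(\<Sum>u\<in>W n. real (insertion_count u x)) = (real (Suc n))\<^sup>2"
      using sum_insertion_count by (metis of_nat_power of_nat_sum)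
    with True show ?thesis
      by (simp add: field_simps power2_eq_square)
  qed (simp add: insertion_count_eq_0)
  finally show ?case .
qed

lemma pmf_marginal_pmf_ratio:
  assumes "u \<in> W m" "v \<in> W (Suc m)"
  shows "pmf (marginal_pmf m) u / pmf (marginal_pmf (Suc m)) v
    = real (Suc (2 * m)) * real (Suc (Suc (2 * m))) / (real (Suc m))\<^sup>2"
proof -
  have fact_Suc: "fact (Suc m) = real (Suc m) * fact m"
    by simp
  have fact_double_Suc: "fact (2 * Suc m) = real (Suc (2 * m)) * real (Suc (Suc (2 * m))) * fact (2 * m)"
    by (simp add: algebra_simps)
  have cancel: "(F\<^sup>2 / D) / ((a * F)\<^sup>2 / (b * D)) = b / a\<^sup>2"
    if "F \<noteq> 0" "D \<noteq> 0" "a \<noteq> 0" for F D a b :: real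
    using that by (simp add: field_simps power2_eq_square)
  have "pmf (marginal_pmf m) u / pmf (marginal_pmf (Suc m)) v
      = ((fact m)\<^sup>2 / fact (2 * m)) / ((real (Suc m) * fact m)\<^sup>2
        / (real (Suc (2 * m)) * real (Suc (Suc (2 * m))) * fact (2 * m)))"
    using assms by (simp only: pmf_marginal_pmf if_True fact_Suc fact_double_Suc)
  also have "\<dots> = real (Suc (2 * m)) * real (Suc (Suc (2 * m))) / (real (Suc m))\<^sup>2"
    by (rule cancel) simp_all
  finally show ?thesis .
qed

section \<open>The Markov property and the bridge\<close>

lemma last_eq_nth: "length xs = Suc n \<Longrightarrow> last xs = xs ! n"
  by (cases xs rule: rev_cases) auto

lemma measure_bind_pmf:
  "measure_pmf.prob (bind_pmf M f) A = (\<integral>x. measure_pmf.prob (f x) A \<partial>measure_pmf M)"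
  unfolding measure_pmf_bind
  by (rule measure_pmf.measure_bind[where N = "count_space UNIV"])
    (auto simp: measure_pmf_in_subprob_algebra)

lemma measure_cond_pmf:
  assumes "measure_pmf.prob p A > 0"
  shows "measure_pmf.prob (cond_pmf p A) B = measure_pmf.prob p (A \<inter> B) / measure_pmf.prob p A"
proof -
  have "set_pmf p \<inter> A \<noteq> {}"
    using assms measure_pmf_zero_iff[of p A] by auto
  then have "measure_pmf (cond_pmf p A) = uniform_measure (measure_pmf p) A"
    by (rule cond_pmf.rep_eq)
  then show ?thesis
    using assms by (simp add: measure_pmf.emeasure_eq_measure)
qed

text \<open>\<open>continuation_pmf j x\<close> is the law of the \<open>j\<close> states following a state \<open>x\<close>, which is
  not itself included: the state reached after \<open>i \<le> j\<close> steps is \<open>(x # q) ! i\<close>.\<close>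

fun continuation_pmf :: "nat \<Rightarrow> word \<Rightarrow> word list pmf" where
  "continuation_pmf 0 x = return_pmf []"
| "continuation_pmf (Suc j) x =
    continuation_pmf j x \<bind> (\<lambda>q. map_pmf (\<lambda>y. q @ [y]) (step_pmf (last (x # q))))"

lemma path_pmf_add:
  "path_pmf (n + j) = path_pmf n \<bind> (\<lambda>p. map_pmf (\<lambda>q. p @ q) (continuation_pmf j (last p)))"
proof (induction j)
  case 0
  show ?case by (simp add: bind_return_pmf')
next
  case (Suc j)
  have last_append: "last (p @ q) = last (last p # q)" if "p \<in> set_pmf (path_pmf n)" for p q
    using length_path_pmf[OF that] by (cases q) auto
  have "path_pmf (n + Suc j) = path_pmf n \<bind> (\<lambda>p. continuation_pmf j (last p) \<bind>
      (\<lambda>q. map_pmf (\<lambda>y. p @ q @ [y]) (step_pmf (last (p @ q)))))"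
    by (simp add: Suc.IH bind_assoc_pmf bind_map_pmf)
  also have "\<dots> = path_pmf n \<bind> (\<lambda>p. continuation_pmf j (last p) \<bind>
      (\<lambda>q. map_pmf (\<lambda>y. p @ q @ [y]) (step_pmf (last (last p # q)))))"
    by (intro bind_pmf_cong refl) (simp add: last_append)
  also have "\<dots> = path_pmf n \<bind> (\<lambda>p. map_pmf (\<lambda>q. p @ q) (continuation_pmf (Suc j) (last p)))"
    by (simp add: map_bind_pmf map_pmf_comp o_def)
  finally show ?case .
qed

lemma prob_path_markov:
  assumes "m < k"
  shows "measure_pmf.prob (path_pmf k) {p. p ! k = w \<and> \<psi> (p ! m) \<and> p ! Suc m = v}
    = measure_pmf.prob (continuation_pmf (k - Suc m) v) {q. (v # q) ! (k - Suc m) = w}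
      * measure_pmf.prob (path_pmf (Suc m)) {p. \<psi> (p ! m) \<and> last p = v}"
proof -
  define j where "j = k - Suc m"
  have k: "k = Suc m + j" using assms by (simp add: j_def)
  let ?E = "{p. p ! k = w \<and> \<psi> (p ! m) \<and> p ! Suc m = v}"
  let ?S = "{p. \<psi> (p ! m) \<and> last p = v}"
  let ?G = "measure_pmf.prob (continuation_pmf j v) {q. (v # q) ! j = w}"
  have "measure_pmf.prob (path_pmf k) ?E = (\<integral>p. measure_pmf.prob
      (map_pmf (\<lambda>q. p @ q) (continuation_pmf j (last p))) ?E \<partial>measure_pmf (path_pmf (Suc m)))"
    unfolding k path_pmf_add by (rule measure_bind_pmf)
  also have "\<dots> = (\<integral>p. indicator ?S p * ?G \<partial>measure_pmf (path_pmf (Suc m)))"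
  proof (intro integral_cong_AE AE_pmfI)
    fix p assume "p \<in> set_pmf (path_pmf (Suc m))"
    then have p: "length p = Suc (Suc m)"
      by (rule length_path_pmf)
    then have "last p = p ! Suc m"
      by (simp add: last_eq_nth)
    moreover have "(p @ q) ! k = (last p # q) ! j" for q
      using p \<open>last p = p ! Suc m\<close> by (cases j) (auto simp: k nth_append)
    ultimately have "(\<lambda>q. p @ q) -` ?E = (if p \<in> ?S then {q. (v # q) ! j = w} else {})"
      using p by (auto simp: nth_append)
    then show "measure_pmf.prob (map_pmf (\<lambda>q. p @ q) (continuation_pmf j (last p))) ?E
        = indicator ?S p * ?G"
      by (auto simp: indicator_def)
  qed simp_all
  also have "\<dots> = ?G * measure_pmf.prob (path_pmf (Suc m)) ?S"
    by simp
  finally show ?thesis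
    by (simp add: j_def)
qed

lemma prob_path_last_two:
  "measure_pmf.prob (path_pmf (Suc m)) {p. p ! m = u \<and> last p = v}
    = pmf (step_pmf u) v * pmf (marginal_pmf m) u"
proof -
  let ?S = "{p. p ! m = u \<and> last p = v}"
  have "measure_pmf.prob (path_pmf (Suc m)) ?S
      = (\<integral>p. measure_pmf.prob (map_pmf (\<lambda>y. p @ [y]) (step_pmf (last p))) ?S \<partial>measure_pmf (path_pmf m))"
    by (simp only: path_pmf.simps measure_bind_pmf)
  also have "\<dots> = (\<integral>p. indicator {p. last p = u} p * pmf (step_pmf u) v \<partial>measure_pmf (path_pmf m))"
  proof (intro integral_cong_AE AE_pmfI)
    fix p assume "p \<in> set_pmf (path_pmf m)"
    then have "length p = Suc m"
      by (rule length_path_pmf)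
    then have "last p = p ! m"
      by (simp add: last_eq_nth)
    with \<open>length p = Suc m\<close> have "(\<lambda>y. p @ [y]) -` ?S = (if last p = u then {v} else {})"
      by (auto simp: nth_append)
    then show "measure_pmf.prob (map_pmf (\<lambda>y. p @ [y]) (step_pmf (last p))) ?S
        = indicator {p. last p = u} p * pmf (step_pmf u) v"
      by (auto simp: indicator_def measure_pmf_single)
  qed simp_all
  also have "\<dots> = pmf (step_pmf u) v * pmf (marginal_pmf m) u"
    by (simp add: marginal_pmf_def pmf_map vimage_def)
  finally show ?thesis .
qed

lemma prob_bridge_consecutive:
  assumes "m < k" and pos: "measure_pmf.prob (path_pmf k) {p. p ! k = w} > 0"
  shows "measure_pmf.prob (bridge_pmf k w) {p. \<psi> (p ! m) \<and> p ! Suc m = v}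
    = measure_pmf.prob (continuation_pmf (k - Suc m) v) {q. (v # q) ! (k - Suc m) = w}
      * measure_pmf.prob (path_pmf (Suc m)) {p. \<psi> (p ! m) \<and> last p = v}
      / measure_pmf.prob (path_pmf k) {p. p ! k = w}"
proof -
  have "{p. p ! k = w} \<inter> {p. \<psi> (p ! m) \<and> p ! Suc m = v} = {p. p ! k = w \<and> \<psi> (p ! m) \<and> p ! Suc m = v}"
    by auto
  then show ?thesis
    unfolding bridge_pmf_def measure_cond_pmf[OF pos] by (simp add: prob_path_markov[OF assms(1)])
qed

theorem bridge_back_prob_eq_reversed_step:
  assumes "m < k"
    and pos: "measure_pmf.prob (path_pmf k) {p. p ! k = w} > 0"
    and pos_bridge: "measure_pmf.prob (bridge_pmf k w) {p. p ! Suc m = v} > 0"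
  shows "bridge_back_prob k w m u v
    = pmf (step_pmf u) v * pmf (marginal_pmf m) u / pmf (marginal_pmf (Suc m)) v"
proof -
  define G where "G = measure_pmf.prob (continuation_pmf (k - Suc m) v) {q. (v # q) ! (k - Suc m) = w}"
  define a where "a = measure_pmf.prob (path_pmf k) {p. p ! k = w}"
  have joint: "measure_pmf.prob (bridge_pmf k w) {p. p ! m = u \<and> p ! Suc m = v}
      = G * (pmf (step_pmf u) v * pmf (marginal_pmf m) u) / a"
    using prob_bridge_consecutive[OF assms(1,2), where \<psi> = "\<lambda>x. x = u" and v = v]
    by (simp add: G_def a_def prob_path_last_two del: path_pmf.simps)
  have single: "measure_pmf.prob (bridge_pmf k w) {p. p ! Suc m = v} = G * pmf (marginal_pmf (Suc m)) v / a"
    using prob_bridge_consecutive[OF assms(1,2), where \<psi> = "\<lambda>_. True" and v = v]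
    by (simp add: G_def a_def marginal_pmf_def pmf_map vimage_def del: path_pmf.simps)
  have "G \<noteq> 0" "a \<noteq> 0"
    using pos pos_bridge single by (auto simp: a_def)
  then show ?thesis
    unfolding bridge_back_prob_def joint single by simp
qed

theorem mainTheorem3:
  fixes k m :: nat and w u v :: word
  assumes "w \<in> W k"
    and "m < k"
    and "v \<in> W (Suc m)"
    and "measure_pmf.prob (path_pmf k) {p. p ! k = w} > 0"
    and "measure_pmf.prob (bridge_pmf k w) {p. p ! Suc m = v} > 0"
    and "u \<in> W m"
  shows "bridge_back_prob k w m u v = real (subword_count v u) / (real (m + 1))^2"
proof -
  have "bridge_back_prob k w m u v
      = pmf (step_pmf u) v * pmf (marginal_pmf m) u / pmf (marginal_pmf (Suc m)) v"
    using assms(2,4,5) by (rule bridge_back_prob_eq_reversed_step)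
  also have "\<dots> = real (subword_count v u) / (real (Suc (2 * m)) * real (Suc (Suc (2 * m))))
      * (pmf (marginal_pmf m) u / pmf (marginal_pmf (Suc m)) v)"
    using assms(3,6) by (simp add: pmf_step_pmf length_W insertion_count_eq_subword_count)
  also have "\<dots> = real (subword_count v u) / (real (m + 1))^2"
    using assms(3,6) by (simp add: pmf_marginal_pmf_ratio)
  finally show ?thesis .
qed

end
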